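(* Let $G\in\mathcal{C}$, let $H$ be a hole of $G$, let $v$ be a major vertex for $H$, let $u$ be a clone of $y$ in $H$, and suppose $uv\in E(G)$. If $yv\notin E(G)$, then $u$ and $v$ have a common neighbor in $H$.
   Context: All graphs are finite and simple; paths are induced paths; a hole is an induced cycle of length at least four. $\mathcal{C}$ is the class of graphs containing no theta, pyramid, prism or turtle as an induced subgraph, where: a theta consists of two nonadjacent vertices $a,b$ and three paths from $a$ to $b$, otherwise vertex-disjoint, any two of which induce a hole; a pyramid consists of a vertex $a$, a triangle $\{b_1,b_2,b_3\}$ and paths $P_i$ from $a$ to $b_i$, pairwise disjoint except at $a$, any two of which induce a hole; a prism consists of two disjoint triangles $\{a_1,a_2,a_3\},\{b_1,b_2,b_3\}$ and pairwise disjoint paths $P_i$ from $a_i$ to $b_i$, any two of which induce a hole; a turtle consists of disjoint paths $P_1$ (from $a_1$ to $b_1$), $P_2$ (from $a_2$ to $b_2$) with $a_1a_2,b_1b_2$ edges and $V(P_1)\cup V(P_2)$ inducing a hole, plus adjacent vertices $x,y$ where $x$ has at least three neighbors in $P_1$ and none in $P_2$, and $y$ has at least three neighbors in $P_2$ and none in $P_1$. For a hole $H$ and $u\notin V(H)$, $N_H(u)$ is the set of neighbors of $u$ in $H$. A vertex $u\notin V(H)$ is minor for $H$ if $N_H(u)\neq\emptyset$ and $N_H(u)$ is contained in the vertex set of some three-vertex subpath of $H$; it is major for $H$ if $N_H(u)\ne\emptyset$ and $u$ is not minor. A vertex $u\notin V(H)$ is a clone of $y\in V(H)$ if $N_H(u)=\{x,y,z\}$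 where $x\text{-}y\text{-}z$ is a subpath of $H$. *)

theory Defs
  imports Main
begin

definition graph :: "'a set \<Rightarrow> ('a \<Rightarrow> 'a \<Rightarrow> bool) \<Rightarrow> bool" where
  "graph V E \<longleftrightarrow> finite V \<and> (\<forall>x y. E x y \<longrightarrow> x \<in> V \<and> y \<in> V)
     \<and> (\<forall>x y. E x y \<longrightarrow> E y x) \<and> (\<forall>x. \<not> E x x)"

definition ipath :: "'a set \<Rightarrow> ('a \<Rightarrow> 'a \<Rightarrow> bool) \<Rightarrow> 'a list \<Rightarrow> bool" where
  "ipath V E ps \<longleftrightarrow> ps \<noteq> [] \<and> distinct ps \<and> set ps \<subseteq> V
     \<and> (\<forall>i. i + 1 < length ps \<longrightarrow> E (ps ! i) (ps ! (i + 1)))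
     \<and> (\<forall>i j. i + 1 < j \<and> j < length ps \<longrightarrow> \<not> E (ps ! i) (ps ! j))"

definition path_from_to :: "'a set \<Rightarrow> ('a \<Rightarrow> 'a \<Rightarrow> bool) \<Rightarrow> 'a list \<Rightarrow> 'a \<Rightarrow> 'a \<Rightarrow> bool" where
  "path_from_to V E ps a b \<longleftrightarrow> ipath V E ps \<and> hd ps = a \<and> last ps = b"

definition hole :: "'a set \<Rightarrow> ('a \<Rightarrow> 'a \<Rightarrow> bool) \<Rightarrow> 'a list \<Rightarrow> bool" where
  "hole V E cs \<longleftrightarrow> length cs \<ge> 4 \<and> distinct cs \<and> set cs \<subseteq> V
     \<and> (\<forall>i < length cs. E (cs ! i) (cs ! ((i + 1) mod length cs)))
     \<and> (\<forall>i < length cs. \<forall>j < length cs. E (cs ! i) (cs ! j) \<longrightarrow>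
           j = (i + 1) mod length cs \<or> i = (j + 1) mod length cs)"

definition induces_hole :: "'a set \<Rightarrow> ('a \<Rightarrow> 'a \<Rightarrow> bool) \<Rightarrow> 'a set \<Rightarrow> bool" where
  "induces_hole V E S \<longleftrightarrow> (\<exists>cs. hole V E cs \<and> set cs = S)"

definition has_theta :: "'a set \<Rightarrow> ('a \<Rightarrow> 'a \<Rightarrow> bool) \<Rightarrow> bool" where
  "has_theta V E \<longleftrightarrow> (\<exists>a b P1 P2 P3. a \<noteq> b \<and> \<not> E a b
     \<and> path_from_to V E P1 a b \<and> path_from_to V E P2 a b \<and> path_from_to V E P3 a b
     \<and> set P1 \<inter> set P2 = {a, b} \<and> set P1 \<inter> set P3 = {a, b} \<and> set P2 \<inter> set P3 = {a, b}
     \<and> induces_hole V E (set P1 \<union> set P2) \<and> induces_hole V E (set P1 \<union> set P3)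
     \<and> induces_hole V E (set P2 \<union> set P3))"

definition has_pyramid :: "'a set \<Rightarrow> ('a \<Rightarrow> 'a \<Rightarrow> bool) \<Rightarrow> bool" where
  "has_pyramid V E \<longleftrightarrow> (\<exists>a b1 b2 b3 P1 P2 P3.
     E b1 b2 \<and> E b1 b3 \<and> E b2 b3
     \<and> path_from_to V E P1 a b1 \<and> path_from_to V E P2 a b2 \<and> path_from_to V E P3 a b3
     \<and> set P1 \<inter> set P2 = {a} \<and> set P1 \<inter> set P3 = {a} \<and> set P2 \<inter> set P3 = {a}
     \<and> induces_hole V E (set P1 \<union> set P2) \<and> induces_hole V E (set P1 \<union> set P3)
     \<and> induces_hole V E (set P2 \<union> set P3))"

definition has_prism :: "'a set \<Rightarrow> ('a \<Rightarrow> 'a \<Rightarrow> bool) \<Rightarrow> bool" where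
  "has_prism V E \<longleftrightarrow> (\<exists>a1 a2 a3 b1 b2 b3 P1 P2 P3.
     E a1 a2 \<and> E a1 a3 \<and> E a2 a3 \<and> E b1 b2 \<and> E b1 b3 \<and> E b2 b3
     \<and> {a1, a2, a3} \<inter> {b1, b2, b3} = {}
     \<and> path_from_to V E P1 a1 b1 \<and> path_from_to V E P2 a2 b2 \<and> path_from_to V E P3 a3 b3
     \<and> set P1 \<inter> set P2 = {} \<and> set P1 \<inter> set P3 = {} \<and> set P2 \<inter> set P3 = {}
     \<and> induces_hole V E (set P1 \<union> set P2) \<and> induces_hole V E (set P1 \<union> set P3)
     \<and> induces_hole V E (set P2 \<union> set P3))"

definition has_turtle :: "'a set \<Rightarrow> ('a \<Rightarrow> 'a \<Rightarrow> bool) \<Rightarrow> bool" where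
  "has_turtle V E \<longleftrightarrow> (\<exists>a1 b1 a2 b2 P1 P2 x y.
     path_from_to V E P1 a1 b1 \<and> path_from_to V E P2 a2 b2
     \<and> set P1 \<inter> set P2 = {} \<and> E a1 a2 \<and> E b1 b2
     \<and> induces_hole V E (set P1 \<union> set P2)
     \<and> x \<in> V \<and> y \<in> V \<and> x \<notin> set P1 \<union> set P2 \<and> y \<notin> set P1 \<union> set P2 \<and> E x y
     \<and> card {w \<in> set P1. E x w} \<ge> 3 \<and> (\<forall>w \<in> set P2. \<not> E x w)
     \<and> card {w \<in> set P2. E y w} \<ge> 3 \<and> (\<forall>w \<in> set P1. \<not> E y w))"

definition in_C :: "'a set \<Rightarrow> ('a \<Rightarrow> 'a \<Rightarrow> bool) \<Rightarrow> bool" where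
  "in_C V E \<longleftrightarrow> graph V E \<and> \<not> has_theta V E \<and> \<not> has_pyramid V E
     \<and> \<not> has_prism V E \<and> \<not> has_turtle V E"

definition nbrs_in :: "('a \<Rightarrow> 'a \<Rightarrow> bool) \<Rightarrow> 'a list \<Rightarrow> 'a \<Rightarrow> 'a set" where
  "nbrs_in E H u = {x \<in> set H. E u x}"

definition sub3 :: "'a list \<Rightarrow> nat \<Rightarrow> 'a set" where
  "sub3 H i = {H ! i, H ! ((i + 1) mod length H), H ! ((i + 2) mod length H)}"

definition minor :: "('a \<Rightarrow> 'a \<Rightarrow> bool) \<Rightarrow> 'a list \<Rightarrow> 'a \<Rightarrow> bool" where
  "minor E H u \<longleftrightarrow> u \<notin> set H \<and> nbrs_in E H u \<noteq> {}
     \<and> (\<exists>i < length H. nbrs_in E H u \<subseteq> sub3 H i)"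

definition major :: "('a \<Rightarrow> 'a \<Rightarrow> bool) \<Rightarrow> 'a list \<Rightarrow> 'a \<Rightarrow> bool" where
  "major E H u \<longleftrightarrow> u \<notin> set H \<and> nbrs_in E H u \<noteq> {} \<and> \<not> minor E H u"

definition clone :: "('a \<Rightarrow> 'a \<Rightarrow> bool) \<Rightarrow> 'a list \<Rightarrow> 'a \<Rightarrow> 'a \<Rightarrow> bool" where
  "clone E H u y \<longleftrightarrow> u \<notin> set H \<and> (\<exists>i < length H. y = H ! ((i + 1) mod length H)
     \<and> nbrs_in E H u = sub3 H i)"

end

theory Submission
  imports Defs
begin

text \<open>Suppose u and v had no common neighbour on H, and rotate H so that the neighbourhood
  x-y-z of the clone u consists of its first three vertices. If v has at least three neighbours
  on H, then the path x-y-z (all of whose vertices see u, none of which sees v), the rest of H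
  (which u does not see) and the edge uv form a turtle. Otherwise, as v is major, it has exactly
  two neighbours on H and they are nonadjacent; v together with the two arcs of H between them
  forms a theta. Holes are handled as lists A @ B, rotated so that the arcs needed start
  at position 0.\<close>

lemma graph_sym: "graph V E \<Longrightarrow> E x y \<Longrightarrow> E y x"
  by (simp add: graph_def)

lemma graph_irrefl: "graph V E \<Longrightarrow> \<not> E x x"
  by (simp add: graph_def)

lemma graph_vertices: "graph V E \<Longrightarrow> E x y \<Longrightarrow> x \<in> V \<and> y \<in> V"
  by (simp add: graph_def)

lemma nbrs_in_cong_set: "set H' = set H \<Longrightarrow> nbrs_in E H' v = nbrs_in E H v"
  by (simp add: nbrs_in_def)

lemma induces_holeI: "hole V E cs \<Longrightarrow> set cs = S \<Longrightarrow> induces_hole V E S"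
  unfolding induces_hole_def by blast

lemma hole_adj_iff:
  assumes "graph V E" "hole V E H" "i < length H" "j < length H"
  shows "E (H!i) (H!j) \<longleftrightarrow> j = (i + 1) mod length H \<or> i = (j + 1) mod length H"
  using assms graph_sym[OF assms(1)] unfolding hole_def by metis

lemma mod_add_left_cancel_nat:
  "((k::nat) + a) mod n = (k + b) mod n \<longleftrightarrow> a mod n = b mod n"
  by (simp add: nat_mod_eq_iff)

lemma hole_rotate:
  assumes G: "graph V E" and h: "hole V E H"
  shows "hole V E (rotate k H)"
proof -
  let ?n = "length H" and ?R = "rotate k H"
  have n: "?n \<ge> 4" using h by (simp add: hole_def)
  have n0: "0 < ?n" using n by linarith
  have R: "?R ! i = H ! ((k + i) mod ?n)" if "i < ?n" for i
    using that by (rule nth_rotate)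
  have succ: "(k + (i + 1) mod ?n) mod ?n = ((k + i) mod ?n + 1) mod ?n" for i
    by (simp add: mod_simps ac_simps)
  have adj: "E (?R!i) (?R!j) \<longleftrightarrow> j = (i + 1) mod ?n \<or> i = (j + 1) mod ?n"
    if "i < ?n" "j < ?n" for i j
  proof -
    have "E (?R!i) (?R!j) \<longleftrightarrow>
        (k + j) mod ?n = ((k + i) mod ?n + 1) mod ?n \<or> (k + i) mod ?n = ((k + j) mod ?n + 1) mod ?n"
      using that n0 hole_adj_iff[OF G h, of "(k + i) mod ?n" "(k + j) mod ?n"] by (simp add: R)
    also have "\<dots> \<longleftrightarrow> (k + j) mod ?n = (k + (i + 1) mod ?n) mod ?n \<or> (k + i) mod ?n = (k + (j + 1) mod ?n) mod ?n"
      by (simp only: succ)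
    also have "\<dots> \<longleftrightarrow> j = (i + 1) mod ?n \<or> i = (j + 1) mod ?n"
      using that by (simp only: mod_add_left_cancel_nat) simp
    finally show ?thesis .
  qed
  have "E (?R!i) (?R!((i + 1) mod ?n))" if "i < ?n" for i
    using adj[of i "(i + 1) mod ?n"] that n0 by simp
  then show ?thesis
    using h adj unfolding hole_def by (simp add: set_rotate)
qed

lemma hole_swap:
  assumes "graph V E" "hole V E (A @ B)"
  shows "hole V E (B @ A)"
  using hole_rotate[OF assms, of "length A"] by (simp add: rotate_append)

lemma hole_take_ipath:
  assumes h: "hole V E H" and k: "0 < k" "k < length H"
  shows "ipath V E (take k H)"
proof -
  let ?n = "length H"
  have edge: "\<forall>i < ?n. E (H!i) (H!((i + 1) mod ?n))" using h unfolding hole_def by blast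
  have nonedge: "\<forall>i < ?n. \<forall>j < ?n. E (H!i) (H!j) \<longrightarrow> j = (i + 1) mod ?n \<or> i = (j + 1) mod ?n"
    using h unfolding hole_def by blast
  have "E (H!i) (H!(i + 1))" if "i + 1 < k" for i
    using edge[rule_format, of i] that k by simp
  moreover have "\<not> E (H!i) (H!j)" if "i + 1 < j" "j < k" for i j
  proof
    assume "E (H!i) (H!j)"
    moreover have "i < ?n" "j < ?n" "i + 1 < ?n" "j + 1 < ?n" using that k by linarith+
    ultimately have "j = i + 1 \<or> i = j + 1"
      using nonedge by (metis mod_less)
    then show False using that by linarith
  qed
  ultimately show ?thesis
    using h k set_take_subset[of k H] unfolding ipath_def hole_def by auto
qed

lemma hole_append_ipath:
  assumes "hole V E (A @ B)" "A \<noteq> []" "B \<noteq> []"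
  shows "ipath V E A"
  using hole_take_ipath[OF assms(1), of "length A"] assms(2,3) by simp

lemma hole_append_ipath_hd:
  assumes "hole V E (A @ B)" "A \<noteq> []" "length B \<ge> 2"
  shows "ipath V E (A @ [hd B])"
proof -
  have "hole V E ((A @ [hd B]) @ tl B)" using assms(1,3) by (cases B) auto
  moreover have "tl B \<noteq> []" using assms(3) by (cases B) auto
  ultimately show ?thesis using hole_append_ipath by blast
qed

lemma hole_append_edge:
  assumes h: "hole V E (A @ B)" and "A \<noteq> []" "B \<noteq> []"
  shows "E (last A) (hd B)"
proof -
  let ?H = "A @ B" and ?i = "length A - 1"
  have "\<forall>i < length ?H. E (?H!i) (?H!((i + 1) mod length ?H))"
    using h unfolding hole_def by blast
  moreover have "?i < length ?H" using assms(2) by (cases A) auto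
  ultimately have "E (?H ! ?i) (?H ! ((?i + 1) mod length ?H))"
    by blast
  moreover have "(?i + 1) mod length ?H = length A" using assms(2,3) by simp
  ultimately show ?thesis
    using assms(2,3) by (simp add: nth_append last_conv_nth hd_conv_nth)
qed

lemma ipath_adj_iff:
  assumes G: "graph V E" and p: "ipath V E ps" and "i < length ps" "j < length ps"
  shows "E (ps!i) (ps!j) \<longleftrightarrow> j = i + 1 \<or> i = j + 1"
proof
  have edge: "\<And>i. i + 1 < length ps \<Longrightarrow> E (ps!i) (ps!(i + 1))"
    and nonedge: "\<And>i j. i + 1 < j \<Longrightarrow> j < length ps \<Longrightarrow> \<not> E (ps!i) (ps!j)"
    using p unfolding ipath_def by blast+
  show "j = i + 1 \<or> i = j + 1" if "E (ps!i) (ps!j)"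
    using that assms(3,4) nonedge[of i j] nonedge[of j i] graph_sym[OF G] graph_irrefl[OF G]
    by (cases i j rule: linorder_cases) fastforce+
  show "E (ps!i) (ps!j)" if "j = i + 1 \<or> i = j + 1"
    using that assms(3,4) edge graph_sym[OF G] by auto
qed

lemma ipath_rev:
  assumes G: "graph V E" and p: "ipath V E ps"
  shows "ipath V E (rev ps)"
proof -
  let ?L = "length ps"
  have "E (rev ps ! i) (rev ps ! j) \<longleftrightarrow> j = i + 1 \<or> i = j + 1" if "i < ?L" "j < ?L" for i j
    using that ipath_adj_iff[OF G p, of "?L - Suc i" "?L - Suc j"] by (auto simp: rev_nth)
  then show ?thesis
    using p unfolding ipath_def by auto
qed

lemma hole_Cons_ipath:
  assumes G: "graph V E" and p: "ipath V E ps" and L: "length ps \<ge> 3"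
    and w: "w \<in> V" "w \<notin> set ps"
    and nbrs: "{x \<in> set ps. E w x} = {hd ps, last ps}"
  shows "hole V E (w # ps)"
proof -
  let ?L = "length ps" and ?c = "w # ps"
  have d: "distinct ps" and ne: "ps \<noteq> []" using p unfolding ipath_def by blast+
  have wk: "E w (ps!k) \<longleftrightarrow> k = 0 \<or> k = ?L - 1" if "k < ?L" for k
  proof -
    have "ps!k \<in> set ps" using that by simp
    then have "E w (ps!k) \<longleftrightarrow> ps!k \<in> {hd ps, last ps}"
      unfolding nbrs[symmetric] by blast
    also have "\<dots> \<longleftrightarrow> ps!k = ps!0 \<or> ps!k = ps!(?L - 1)"
      using ne by (simp add: hd_conv_nth last_conv_nth)
    also have "\<dots> \<longleftrightarrow> k = 0 \<or> k = ?L - 1"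
      using d that ne by (simp add: nth_eq_iff_index_eq)
    finally show ?thesis .
  qed
  have wk': "E (ps!k) w \<longleftrightarrow> k = 0 \<or> k = ?L - 1" if "k < ?L" for k
    using wk[OF that] graph_sym[OF G] by blast
  have wrap: "(k + 1) mod (?L + 1) = (if k = ?L then 0 else k + 1)" if "k < ?L + 1" for k
    using that by auto
  have adj: "E (?c!i) (?c!j) \<longleftrightarrow> j = (i + 1) mod (?L + 1) \<or> i = (j + 1) mod (?L + 1)"
    if "i < ?L + 1" "j < ?L + 1" for i j
  proof (cases i)
    case 0
    then show ?thesis
      using that L wk[of "j - 1"] graph_irrefl[OF G] wrap[of j] by (cases j) auto
  next
    case (Suc i')
    then show ?thesis
      using that L wk'[of i'] ipath_adj_iff[OF G p, of i'] wrap[of i] wrap[of j] by (cases j) auto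
  qed
  have "E (?c!i) (?c!((i + 1) mod length ?c))" if "i < length ?c" for i
    using adj[of i "(i + 1) mod (?L + 1)"] that by simp
  then show ?thesis
    using p L w adj unfolding hole_def ipath_def by auto
qed

lemma ipath_three:
  assumes "distinct [a, b, c]" "{a, b, c} \<subseteq> V" "E a b" "E b c" "\<not> E a c"
  shows "ipath V E [a, b, c]"
proof -
  have "E ([a, b, c] ! i) ([a, b, c] ! (i + 1))" if "i + 1 < 3" for i
    using that assms by (cases i) (auto simp: less_Suc_eq)
  moreover have "\<not> E ([a, b, c] ! i) ([a, b, c] ! j)" if "i + 1 < j" "j < 3" for i j
    using that assms by (cases i) (auto simp: less_Suc_eq)
  ultimately show ?thesis
    using assms unfolding ipath_def by auto
qed

lemma hole_Cons_append_hd: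
  assumes G: "graph V E" and h: "hole V E (A @ B)"
    and A: "length A \<ge> 2" and B: "length B \<ge> 2"
    and v: "v \<in> V" "v \<notin> set (A @ B)"
    and nv: "nbrs_in E (A @ B) v = {hd A, hd B}"
  shows "hole V E (v # A @ [hd B])"
proof -
  have "A \<noteq> []" "B \<noteq> []" using A B by auto
  then have "{x \<in> set (A @ [hd B]). E v x} = {hd (A @ [hd B]), last (A @ [hd B])}"
    using nv unfolding nbrs_in_def by auto
  moreover have "ipath V E (A @ [hd B])"
    using hole_append_ipath_hd[OF h] \<open>A \<noteq> []\<close> B by blast
  ultimately show ?thesis
    using hole_Cons_ipath[OF G, of "A @ [hd B]" v] A v hd_in_set[OF \<open>B \<noteq> []\<close>] by auto
qed

lemma has_theta_split_hole:
  assumes G: "graph V E" and h: "hole V E (A @ B)"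
    and A: "length A \<ge> 2" and B: "length B \<ge> 2"
    and v: "v \<in> V" "v \<notin> set (A @ B)"
    and nv: "nbrs_in E (A @ B) v = {hd A, hd B}"
  shows "has_theta V E"
proof -
  let ?a = "hd A" and ?b = "hd B"
  define P1 where "P1 = A @ [?b]"
  define P2 where "P2 = [?a, v, ?b]"
  define P3 where "P3 = rev (B @ [?a])"
  have ne: "A \<noteq> []" "B \<noteq> []" using A B by auto
  have ab: "?a \<in> set A" "?b \<in> set B" using ne by simp_all
  have hs: "hole V E (B @ A)" using hole_swap[OF G h] .
  have disj: "set A \<inter> set B = {}" and HV: "set (A @ B) \<subseteq> V"
    using h unfolding hole_def by auto
  have ip1: "ipath V E P1" unfolding P1_def using hole_append_ipath_hd[OF h ne(1) B] .
  have ip3: "ipath V E (B @ [?a])" using hole_append_ipath_hd[OF hs ne(2) A] .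
  have nab: "\<not> E ?a ?b"
    using ipath_adj_iff[OF G ip1, of 0 "length A"] A ne unfolding P1_def
    by (simp add: nth_append hd_conv_nth)
  have p1: "path_from_to V E P1 ?a ?b"
    using ip1 ne unfolding path_from_to_def P1_def by simp
  have p2: "path_from_to V E P2 ?a ?b"
  proof -
    have "?a \<in> nbrs_in E (A @ B) v" "?b \<in> nbrs_in E (A @ B) v" using nv by simp_all
    then have av: "E ?a v" and vb: "E v ?b" using graph_sym[OF G] unfolding nbrs_in_def by auto
    have "distinct [?a, v, ?b]" using ab disj v by auto
    moreover have "{?a, v, ?b} \<subseteq> V" using ab HV v by auto
    ultimately have "ipath V E P2"
      unfolding P2_def using av vb nab by (rule ipath_three)
    then show ?thesis
      unfolding path_from_to_def P2_def by simp
  qed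
  have p3: "path_from_to V E P3 ?a ?b"
    using ipath_rev[OF G ip3] ne unfolding path_from_to_def P3_def by (simp add: hd_rev last_rev)
  have h12: "induces_hole V E (set P1 \<union> set P2)"
    by (rule induces_holeI[OF hole_Cons_append_hd[OF G h A B v nv]])
      (use ab in \<open>auto simp: P1_def P2_def\<close>)
  have h13: "induces_hole V E (set P1 \<union> set P3)"
    by (rule induces_holeI[OF h]) (use ab in \<open>auto simp: P1_def P3_def\<close>)
  have "nbrs_in E (B @ A) v = nbrs_in E (A @ B) v" by (auto simp: nbrs_in_def)
  then have nv': "nbrs_in E (B @ A) v = {?b, ?a}" unfolding nv by (simp only: insert_commute)
  have v': "v \<notin> set (B @ A)" using v(2) by simp
  have "hole V E (v # B @ [?a])"
    using hole_Cons_append_hd[OF G hs B A v(1) v' nv'] .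
  then have h23: "induces_hole V E (set P2 \<union> set P3)"
    by (rule induces_holeI) (use ab in \<open>auto simp: P2_def P3_def\<close>)
  have "?a \<noteq> ?b" using ab disj by auto
  moreover have "set P1 \<inter> set P2 = {?a, ?b}" "set P1 \<inter> set P3 = {?a, ?b}"
    "set P2 \<inter> set P3 = {?a, ?b}"
    using ab disj v unfolding P1_def P2_def P3_def by auto
  ultimately show ?thesis
    unfolding has_theta_def using nab p1 p2 p3 h12 h13 h23 by blast
qed

lemma has_turtle_split_hole:
  assumes G: "graph V E" and h: "hole V E (A @ B)" and A: "length A = 3"
    and u: "u \<notin> set (A @ B)" and nu: "nbrs_in E (A @ B) u = set A"
    and v: "v \<notin> set (A @ B)" and uv: "E u v"
    and nv: "nbrs_in E (A @ B) v \<inter> set A = {}"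
    and card: "card (nbrs_in E (A @ B) v) \<ge> 3"
  shows "has_turtle V E"
proof -
  have ne: "A \<noteq> []" "B \<noteq> []" using A h unfolding hole_def by auto
  have hs: "hole V E (B @ A)" using hole_swap[OF G h] .
  have dA: "distinct A" and disj: "set A \<inter> set B = {}" using h unfolding hole_def by auto
  have p1: "path_from_to V E (rev A) (last A) (hd A)"
    using ipath_rev[OF G hole_append_ipath[OF h ne]] ne
    unfolding path_from_to_def by (simp add: hd_rev last_rev)
  have p2: "path_from_to V E B (hd B) (last B)"
    using hole_append_ipath[OF hs ne(2,1)] unfolding path_from_to_def by simp
  have e1: "E (last A) (hd B)" using hole_append_edge[OF h ne] .
  have e2: "E (hd A) (last B)" using graph_sym[OF G hole_append_edge[OF hs ne(2,1)]] .
  have hAB: "induces_hole V E (set (rev A) \<union> set B)"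
    by (rule induces_holeI[OF h]) simp
  have uvV: "u \<in> V" "v \<in> V" using graph_vertices[OF G uv] by simp_all
  have uA: "{w \<in> set (rev A). E u w} = set A"
    using nu unfolding nbrs_in_def by auto
  have "card (set A) = 3" using distinct_card[OF dA] A by simp
  then have cu: "card {w \<in> set (rev A). E u w} \<ge> 3" unfolding uA by simp
  have uB: "\<forall>w \<in> set B. \<not> E u w"
    using nu disj unfolding nbrs_in_def by auto
  have vA: "\<forall>w \<in> set (rev A). \<not> E v w"
    using nv unfolding nbrs_in_def by auto
  have "{w \<in> set B. E v w} = nbrs_in E (A @ B) v"
    using vA unfolding nbrs_in_def by auto
  then have cv: "card {w \<in> set B. E v w} \<ge> 3" using card by simp
  have "set (rev A) \<inter> set B = {}" "u \<notin> set (rev A) \<union> set B" "v \<notin> set (rev A) \<union> set B"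
    using disj u v by auto
  then show ?thesis
    unfolding has_turtle_def using p1 p2 e1 e2 hAB uvV uv cu uB cv vA by blast
qed

lemma card_le_2E:
  assumes "finite S" "S \<noteq> {}" "card S \<le> 2"
  obtains a b where "S = {a, b}"
proof -
  have "0 < card S" using assms(1,2) by (simp add: card_gt_0_iff)
  then have "card S = 1 \<or> card S = 2" using assms(3) by linarith
  then show ?thesis
    using that by (auto simp: card_1_singleton_iff card_2_iff)
qed

lemma major_card_le_2_nonadjacent:
  assumes h: "hole V E H" and m: "major E H v" and c: "card (nbrs_in E H v) \<le> 2"
  obtains p q where "p + 2 \<le> q" "q + 2 \<le> length H + p" "q < length H"
    "nbrs_in E H v = {H!p, H!q}"
proof -
  let ?n = "length H" and ?N = "nbrs_in E H v"
  have n: "?n \<ge> 4" using h unfolding hole_def by simp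
  have not_sub3: "\<not> ?N \<subseteq> sub3 H j" if "j < ?n" for j
    using m that unfolding major_def minor_def by blast
  have "finite ?N" "?N \<noteq> {}" using m unfolding nbrs_in_def major_def by auto
  then obtain a b where ab: "?N = {a, b}" using card_le_2E c by blast
  then have "a \<in> set H" "b \<in> set H" unfolding nbrs_in_def by auto
  then obtain i j where ij: "i < ?n" "j < ?n" "?N = {H!i, H!j}"
    using ab by (auto simp: in_set_conv_nth)
  obtain p q where pq: "p \<le> q" "q < ?n" and N: "?N = {H!p, H!q}"
  proof (cases "i \<le> j")
    case True
    then show ?thesis using that ij by blast
  next
    case False
    then show ?thesis using that[of j i] ij by (simp add: insert_commute)
  qed
  have "q \<noteq> p \<and> q \<noteq> p + 1"
    using not_sub3[of p] pq N by (auto simp: sub3_def)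
  moreover have "\<not> (p = 0 \<and> q = ?n - 1)"
  proof
    assume pq0: "p = 0 \<and> q = ?n - 1"
    have "?n - 1 + 1 = ?n" "?n - 1 + 2 = ?n + 1" using n by simp_all
    moreover have "(?n + 1) mod ?n = 1" using n by (simp only: mod_add_self1) simp
    ultimately have sub: "sub3 H (?n - 1) = {H!(?n - 1), H!0, H!1}" unfolding sub3_def by simp
    have "?N \<subseteq> sub3 H (?n - 1)" unfolding N sub using pq0 by blast
    moreover have "?n - 1 < ?n" using n by simp
    ultimately show False using not_sub3 by blast
  qed
  ultimately have "p + 2 \<le> q" "q + 2 \<le> ?n + p" using pq by arith+
  then show ?thesis using that pq N by blast
qed

lemma has_theta_major_card_le_2:
  assumes G: "graph V E" and h: "hole V E H" and m: "major E H v"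
    and c: "card (nbrs_in E H v) \<le> 2"
  shows "has_theta V E"
proof -
  let ?n = "length H"
  obtain p q where pq: "p + 2 \<le> q" "q + 2 \<le> ?n + p" "q < ?n"
    and N: "nbrs_in E H v = {H!p, H!q}"
    using major_card_le_2_nonadjacent[OF h m c] .
  define R where "R = rotate p H"
  define A where "A = take (q - p) R"
  define B where "B = drop (q - p) R"
  have AB: "A @ B = R" and len: "length R = ?n" unfolding A_def B_def R_def by simp_all
  then have hAB: "hole V E (A @ B)" using hole_rotate[OF G h] unfolding R_def by simp
  have lA: "length A \<ge> 2" and lB: "length B \<ge> 2"
    using pq len unfolding A_def B_def by simp_all
  have "H \<noteq> []" "R \<noteq> []" using len pq by auto
  then have "hd A = R!0" using pq unfolding A_def by (simp add: hd_conv_nth)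
  also have "\<dots> = H!p" using pq \<open>H \<noteq> []\<close> nth_rotate[of 0 H p] unfolding R_def by simp
  finally have hdA: "hd A = H!p" .
  have "hd B = R!(q - p)" using pq len unfolding B_def by (simp add: hd_drop_conv_nth)
  also have "\<dots> = H!q" using pq nth_rotate[of "q - p" H p] unfolding R_def by simp
  finally have hdB: "hd B = H!q" .
  have setAB: "set (A @ B) = set H" unfolding AB R_def by simp
  have "H!p \<in> nbrs_in E H v" using N by simp
  then have vV: "v \<in> V" using graph_vertices[OF G] unfolding nbrs_in_def by blast
  have "v \<notin> set (A @ B)" using m setAB unfolding major_def by simp
  moreover have "nbrs_in E (A @ B) v = {hd A, hd B}"
    using nbrs_in_cong_set[OF setAB] N hdA hdB by simp
  ultimately show ?thesis
    using has_theta_split_hole[OF G hAB lA lB vV] by blast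
qed

lemma clone_split_hole:
  assumes G: "graph V E" and h: "hole V E H" and c: "clone E H u y"
  obtains A B where "hole V E (A @ B)" "set (A @ B) = set H" "length A = 3"
    "nbrs_in E H u = set A"
proof -
  let ?n = "length H"
  obtain i where i: "i < ?n" "nbrs_in E H u = sub3 H i"
    using c unfolding clone_def by blast
  define R where "R = rotate i H"
  have n: "?n \<ge> 4" using h unfolding hole_def by simp
  then have "H \<noteq> []" by (cases H) simp_all
  have "length R \<ge> 3" using n unfolding R_def by simp
  then have "take 3 R = [R!0, R!1, R!2]"
    by (cases R; cases "tl R"; cases "tl (tl R)") (auto simp: numeral_3_eq_3 numeral_2_eq_2)
  also have "\<dots> = [H!i, H!((i + 1) mod ?n), H!((i + 2) mod ?n)]"
    using n i \<open>H \<noteq> []\<close> nth_rotate[of 0 H i] nth_rotate[of 1 H i] nth_rotate[of 2 H i]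
    unfolding R_def by simp
  finally have "set (take 3 R) = sub3 H i" unfolding sub3_def by simp
  moreover have "hole V E (take 3 R @ drop 3 R)" using hole_rotate[OF G h] unfolding R_def by simp
  moreover have "set (take 3 R @ drop 3 R) = set H" unfolding R_def by simp
  moreover have "length (take 3 R) = 3" using n unfolding R_def by simp
  ultimately show ?thesis using that i by metis
qed

theorem lemma2p3:
  fixes V :: "'a set" and E :: "'a \<Rightarrow> 'a \<Rightarrow> bool" and H :: "'a list" and u v y :: 'a
  assumes "in_C V E"
    and "hole V E H"
    and "major E H v"
    and "clone E H u y"
    and "E u v"
    and "\<not> E y v"
  shows "\<exists>w \<in> set H. E u w \<and> E v w"
proof (rule ccontr)
  assume no_common: "\<not> (\<exists>w \<in> set H. E u w \<and> E v w)"
  have G: "graph V E" using assms(1) unfolding in_C_def by blast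
  obtain A B where hAB: "hole V E (A @ B)" and setAB: "set (A @ B) = set H"
    and A: "length A = 3" and nu: "nbrs_in E H u = set A"
    using clone_split_hole[OF G assms(2,4)] .
  have N: "nbrs_in E (A @ B) x = nbrs_in E H x" for x using nbrs_in_cong_set[OF setAB] .
  have out: "u \<notin> set (A @ B)" "v \<notin> set (A @ B)"
    using assms(3,4) setAB unfolding major_def clone_def by simp_all
  have nv: "nbrs_in E (A @ B) v \<inter> set A = {}"
    using no_common nu unfolding N by (auto simp: nbrs_in_def)
  show False
  proof (cases "card (nbrs_in E H v) \<ge> 3")
    case True
    then have "has_turtle V E"
      using has_turtle_split_hole[OF G hAB A out(1) _ out(2) assms(5) nv] nu unfolding N by blast
    then show False using assms(1) unfolding in_C_def by blast
  next
    case False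
    then have "has_theta V E" using has_theta_major_card_le_2[OF G assms(2,3)] by simp
    then show False using assms(1) unfolding in_C_def by blast
  qed
qed

end
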